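(* Let $H$ be a Kekul\'ean hexagonal system. For every integer $n\ge0$, the map $f$ is a bijection from the set of Clar covers of $H$ with exactly $n$ hexagons onto the set of induced subgraphs of $R(H)$ isomorphic to the $n$-cube $Q_n$.
   Context: A hexagonal system is a 2-connected finite plane graph in which every interior face is a regular hexagon of side length one; its hexagons are the boundaries of its interior faces; it is Kekul\'ean if it has a perfect matching. A Clar cover of $H$ is a spanning subgraph each of whose components is a hexagon of $H$ or a single edge. The resonance graph $R(H)$ has the perfect matchings of $H$ as vertices, two adjacent iff their symmetric difference is the edge set of a hexagon of $H$. For a Clar cover $C$, $f(C)$ denotes the subgraph of $R(H)$ induced by all perfect matchings $M$ of $H$ such that every hexagon component of $C$ is $M$-alternating and every single-edge component of $C$ belongs to $M$. *)

theory Defs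
  imports Main
begin

text \<open>Hexagonal systems are realised inside the hexagonal (honeycomb) lattice.
Hexagons (cells) of the lattice are indexed by axial coordinates in int x int;
two cells are adjacent (share an edge) iff their difference is one of six vectors.
A lattice vertex is a triangle of three pairwise adjacent cells (the three cells
meeting at that vertex); a lattice edge joins two vertices sharing two cells.\<close>

type_synonym cell = "int \<times> int"
type_synonym hvertex = "cell set"
type_synonym hedge = "hvertex set"

definition adj_cell :: "cell \<Rightarrow> cell \<Rightarrow> bool" where
  "adj_cell c d \<longleftrightarrow>
     (fst d - fst c, snd d - snd c) \<in> {(1,0),(0,1),(-1,1),(-1,0),(0,-1),(1,-1)}"

definition lattice_vertex :: "hvertex \<Rightarrow> bool" where
  "lattice_vertex v \<longleftrightarrow> card v = 3 \<and> (\<forall>c\<in>v. \<forall>d\<in>v. c \<noteq> d \<longrightarrow> adj_cell c d)"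

definition lattice_edge :: "hedge \<Rightarrow> bool" where
  "lattice_edge e \<longleftrightarrow>
     (\<exists>v w. e = {v, w} \<and> lattice_vertex v \<and> lattice_vertex w \<and> card (v \<inter> w) = 2)"

definition hex_vertices :: "cell \<Rightarrow> hvertex set" where
  "hex_vertices h = {v. lattice_vertex v \<and> h \<in> v}"

definition hex_edges :: "cell \<Rightarrow> hedge set" where
  "hex_edges h = {e. lattice_edge e \<and> (\<forall>v\<in>e. h \<in> v)}"

definition hs_vertices :: "cell set \<Rightarrow> hvertex set" where
  "hs_vertices S = (\<Union>h\<in>S. hex_vertices h)"

definition hs_edges :: "cell set \<Rightarrow> hedge set" where
  "hs_edges S = (\<Union>h\<in>S. hex_edges h)"

definition graph_connected :: "'v set \<Rightarrow> 'v set set \<Rightarrow> bool" where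
  "graph_connected V E \<longleftrightarrow> V \<noteq> {} \<and>
     (\<forall>u\<in>V. \<forall>w\<in>V. (u, w) \<in> {(x, y). x \<in> V \<and> y \<in> V \<and> {x, y} \<in> E}\<^sup>*)"

definition two_connected :: "'v set \<Rightarrow> 'v set set \<Rightarrow> bool" where
  "two_connected V E \<longleftrightarrow> finite V \<and> 3 \<le> card V \<and> graph_connected V E \<and>
     (\<forall>x\<in>V. graph_connected (V - {x}) {e\<in>E. x \<notin> e})"

text \<open>A hexagonal system, given by its set S of hexagons: S is finite, the graph it
spans is 2-connected, and the cells outside S form a single (infinite) connected region,
so that the interior faces of the graph are exactly the hexagons in S.\<close>
definition hexagonal_system :: "cell set \<Rightarrow> bool" where
  "hexagonal_system S \<longleftrightarrow> finite S \<and> S \<noteq> {} \<and>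
     two_connected (hs_vertices S) (hs_edges S) \<and>
     (\<forall>c d. c \<notin> S \<longrightarrow> d \<notin> S \<longrightarrow>
        (c, d) \<in> {(x, y). x \<notin> S \<and> y \<notin> S \<and> adj_cell x y}\<^sup>*)"

definition perfect_matching :: "cell set \<Rightarrow> hedge set \<Rightarrow> bool" where
  "perfect_matching S M \<longleftrightarrow> M \<subseteq> hs_edges S \<and>
     (\<forall>v\<in>hs_vertices S. \<exists>!e. e \<in> M \<and> v \<in> e)"

definition kekulean :: "cell set \<Rightarrow> bool" where
  "kekulean S \<longleftrightarrow> (\<exists>M. perfect_matching S M)"

definition alternating :: "hedge set \<Rightarrow> cell \<Rightarrow> bool" where
  "alternating M h \<longleftrightarrow> (\<forall>e\<in>hex_edges h. \<forall>e'\<in>hex_edges h.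
      e \<noteq> e' \<and> e \<inter> e' \<noteq> {} \<longrightarrow> (e \<in> M \<longleftrightarrow> e' \<notin> M))"

text \<open>A Clar cover, described by its set K of hexagon components and its set F of
single-edge components: these pieces are pairwise vertex-disjoint and cover all vertices.
(The spanning subgraph is the one with edge set hex_edges of K together with F.)\<close>
definition clar_cover :: "cell set \<Rightarrow> cell set \<Rightarrow> hedge set \<Rightarrow> bool" where
  "clar_cover S K F \<longleftrightarrow> K \<subseteq> S \<and> F \<subseteq> hs_edges S \<and>
     (\<forall>h\<in>K. \<forall>h'\<in>K. h \<noteq> h' \<longrightarrow> hex_vertices h \<inter> hex_vertices h' = {}) \<and>
     (\<forall>e\<in>F. \<forall>e'\<in>F. e \<noteq> e' \<longrightarrow> e \<inter> e' = {}) \<and>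
     (\<forall>e\<in>F. \<forall>h\<in>K. e \<inter> hex_vertices h = {}) \<and>
     (\<Union>h\<in>K. hex_vertices h) \<union> \<Union>F = hs_vertices S"

definition res_adj :: "cell set \<Rightarrow> hedge set \<Rightarrow> hedge set \<Rightarrow> bool" where
  "res_adj S M M' \<longleftrightarrow> (\<exists>h\<in>S. (M - M') \<union> (M' - M) = hex_edges h)"

definition f_set :: "cell set \<Rightarrow> cell set \<Rightarrow> hedge set \<Rightarrow> hedge set set" where
  "f_set S K F = {M. perfect_matching S M \<and> (\<forall>h\<in>K. alternating M h) \<and> F \<subseteq> M}"

definition cube_vertices :: "nat \<Rightarrow> nat set set" where
  "cube_vertices n = Pow {..<n}"

definition cube_adj :: "nat set \<Rightarrow> nat set \<Rightarrow> bool" where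
  "cube_adj A B \<longleftrightarrow> card ((A - B) \<union> (B - A)) = 1"

definition graph_iso :: "'a set \<Rightarrow> ('a \<Rightarrow> 'a \<Rightarrow> bool) \<Rightarrow> 'b set \<Rightarrow> ('b \<Rightarrow> 'b \<Rightarrow> bool) \<Rightarrow> bool" where
  "graph_iso V1 adj1 V2 adj2 \<longleftrightarrow>
     (\<exists>\<phi>. bij_betw \<phi> V1 V2 \<and> (\<forall>x\<in>V1. \<forall>y\<in>V1. adj1 x y \<longleftrightarrow> adj2 (\<phi> x) (\<phi> y)))"

end

theory Submission
  imports Defs
begin

text \<open>The hexagons of a Clar cover \<open>C = (K, F)\<close> are pairwise disjoint and each has exactly two
  perfect matchings, so the matchings in \<open>f(C)\<close> correspond to the subsets \<open>B \<subseteq> K\<close> of hexagons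
  carrying their odd edges, and two of them are adjacent in \<open>R(H)\<close> iff the subsets differ in one
  hexagon: \<open>f(C)\<close> is a \<open>|K|\<close>-cube. \<open>C\<close> is recovered from \<open>f(C)\<close>: \<open>K\<close> consists of the hexagons
  flipped along its edges and \<open>F\<close> of the edges common to all its matchings.

  Conversely, let \<open>\<psi>\<close> embed \<open>Q\<^sub>n\<close> as an induced subgraph of \<open>R(H)\<close> and let \<open>h\<^sub>i\<close> be the hexagon
  flipped between \<open>\<psi> {}\<close> and \<open>\<psi> {i}\<close>. Two hexagons of the honeycomb share at most one edge, which
  forces every 4-cycle of \<open>R(H)\<close> to be a commuting square of two hexagon flips. Hence the \<open>h\<^sub>i\<close>
  are vertex-disjoint (a common vertex would make \<open>h\<^sub>j\<close> alternating in two matchings differing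
  in a single edge of \<open>h\<^sub>j\<close>), \<open>\<psi> A\<close> is \<open>\<psi> {}\<close> with the \<open>h\<^sub>i\<close>, \<open>i \<in> A\<close>, flipped, and the cube
  is \<open>f\<close> of the Clar cover formed by the \<open>h\<^sub>i\<close> and the remaining edges of \<open>\<psi> {}\<close>.\<close>

section \<open>Corners and sides of a hexagon\<close>

text \<open>\<open>hex_nbr h k\<close> (\<open>k\<close> taken mod 6) runs through the six neighbours of cell \<open>h\<close> counterclockwise;
  \<open>hex_vertex h k\<close> is the corner of \<open>h\<close> shared with its \<open>k\<close>-th and \<open>(k+1)\<close>-st neighbours, and
  \<open>hex_edge h k\<close> the side of \<open>h\<close> shared with its \<open>(k+1)\<close>-st neighbour.\<close>

definition hex_dir :: "nat \<Rightarrow> int \<times> int" where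
  "hex_dir k = [(1,0),(0,1),(-1,1),(-1,0),(0,-1),(1,-1)] ! (k mod 6)"

definition hex_nbr :: "cell \<Rightarrow> nat \<Rightarrow> cell" where
  "hex_nbr h k = (fst h + fst (hex_dir k), snd h + snd (hex_dir k))"

definition hex_vertex :: "cell \<Rightarrow> nat \<Rightarrow> hvertex" where
  "hex_vertex h k = {h, hex_nbr h k, hex_nbr h (Suc k)}"

definition hex_edge :: "cell \<Rightarrow> nat \<Rightarrow> hedge" where
  "hex_edge h k = {hex_vertex h k, hex_vertex h (Suc k)}"

lemma less_6_cases: "(k::nat) < 6 \<Longrightarrow> k = 0 \<or> k = 1 \<or> k = 2 \<or> k = 3 \<or> k = 4 \<or> k = 5"
  by auto

lemma ex_less_6_iff: "(\<exists>k<6. P k) \<longleftrightarrow> P 0 \<or> P 1 \<or> P 2 \<or> P 3 \<or> P 4 \<or> P (5::nat)"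
  by (auto simp: numeral_eq_Suc less_Suc_eq)

lemma mod_6_reduce:
  "(\<And>x y::nat. x < 6 \<Longrightarrow> y < 6 \<Longrightarrow> P x (Suc x mod 6) y (Suc y mod 6))
    \<Longrightarrow> P (i mod 6) (Suc i mod 6) (j mod 6) (Suc j mod 6)"
  by (metis mod_Suc_eq mod_less_divisor zero_less_numeral)

lemma Suc_mod_6_inj: "Suc i mod 6 = Suc j mod 6 \<Longrightarrow> (i::nat) mod 6 = j mod 6"
proof -
  have "\<And>x y::nat. x < 6 \<Longrightarrow> y < 6 \<Longrightarrow> Suc x mod 6 = Suc y mod 6 \<longrightarrow> x = y"
    by (drule less_6_cases)+ (elim disjE; simp)
  then show "Suc i mod 6 = Suc j mod 6 \<Longrightarrow> i mod 6 = j mod 6"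
    using mod_6_reduce[where P="\<lambda>a b c d. b = d \<longrightarrow> a = c"] by blast
qed

lemma Suc_mod_6_neq: "Suc k mod 6 \<noteq> (k::nat) mod 6"
proof -
  have "Suc k mod 6 = Suc (k mod 6) mod 6" by (simp add: mod_Suc_eq)
  then show ?thesis using less_6_cases[of "k mod 6"] by auto
qed

lemma hex_nbr_mod: "hex_nbr h (k mod 6) = hex_nbr h k"
  by (simp add: hex_nbr_def hex_dir_def)

lemma hex_vertex_mod: "hex_vertex h (k mod 6) = hex_vertex h k"
  by (simp add: hex_vertex_def hex_nbr_def hex_dir_def mod_Suc_eq)

lemma hex_edge_mod: "hex_edge h (k mod 6) = hex_edge h k"
  by (metis hex_edge_def hex_vertex_mod mod_Suc_eq)

lemma hex_nbr_eq_iff: "hex_nbr h a = hex_nbr h b \<longleftrightarrow> a mod 6 = b mod 6"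
proof -
  have "a mod 6 < 6" "b mod 6 < 6" by auto
  then have "hex_nbr h (a mod 6) = hex_nbr h (b mod 6) \<longleftrightarrow> a mod 6 = b mod 6"
    using less_6_cases[of "a mod 6"] less_6_cases[of "b mod 6"]
    by (cases h) (auto simp: hex_nbr_def hex_dir_def)
  then show ?thesis by (simp add: hex_nbr_mod)
qed

lemma hex_nbr_neq: "hex_nbr h k \<noteq> h"
proof -
  have "hex_nbr h (k mod 6) \<noteq> h" using less_6_cases[of "k mod 6"]
    by (cases h) (auto simp: hex_nbr_def hex_dir_def)
  then show ?thesis by (simp add: hex_nbr_mod)
qed

lemma lattice_vertex_hex_vertex: "lattice_vertex (hex_vertex h k)"
proof -
  have "lattice_vertex (hex_vertex h k)" if "k < 6" for k
    using less_6_cases[OF that]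
    by (cases h) (elim disjE; simp add: lattice_vertex_def hex_vertex_def hex_nbr_def hex_dir_def adj_cell_def)
  then show ?thesis by (metis hex_vertex_mod mod_less_divisor zero_less_numeral)
qed

lemma hex_vertex_eq_iff: "hex_vertex h i = hex_vertex h j \<longleftrightarrow> i mod 6 = j mod 6"
proof
  assume e: "hex_vertex h i = hex_vertex h j"
  have "hex_nbr h i \<in> hex_vertex h j" "hex_nbr h (Suc i) \<in> hex_vertex h j"
    using e by (auto simp: hex_vertex_def)
  then have "i mod 6 = j mod 6 \<or> i mod 6 = Suc j mod 6"
    and "Suc i mod 6 = j mod 6 \<or> Suc i mod 6 = Suc j mod 6"
    by (auto simp: hex_vertex_def hex_nbr_eq_iff hex_nbr_neq hex_nbr_neq[symmetric])
  moreover have "\<And>x y::nat. x < 6 \<Longrightarrow> y < 6 \<Longrightarrow> (x = y \<or> x = Suc y mod 6) \<longrightarrow>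
      (Suc x mod 6 = y \<or> Suc x mod 6 = Suc y mod 6) \<longrightarrow> x = y"
    by (drule less_6_cases)+ (elim disjE; simp)
  ultimately show "i mod 6 = j mod 6"
    using mod_6_reduce[where P="\<lambda>a b c d. (a = c \<or> a = d) \<longrightarrow> (b = c \<or> b = d) \<longrightarrow> a = c"]
    by blast
qed (metis hex_vertex_mod)

lemma hex_vertex_Int_Suc: "hex_vertex h k \<inter> hex_vertex h (Suc k) = {h, hex_nbr h (Suc k)}"
proof -
  have "hex_vertex h (k mod 6) \<inter> hex_vertex h (Suc (k mod 6)) = {h, hex_nbr h (Suc (k mod 6))}"
    using less_6_cases[of "k mod 6"]
    by (cases h) (auto simp: hex_vertex_def hex_nbr_def hex_dir_def)
  then show ?thesis
    by (metis hex_vertex_mod hex_nbr_mod mod_Suc_eq)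
qed

lemma lattice_edge_hex_edge: "lattice_edge (hex_edge h k)"
  unfolding lattice_edge_def hex_edge_def
  using lattice_vertex_hex_vertex hex_vertex_Int_Suc hex_nbr_neq by (metis card_2_iff)

lemma adj_cell_triangle:
  assumes "adj_cell h a" "adj_cell h b" "adj_cell a b"
  shows "\<exists>k<6. a = hex_nbr h k \<and> b = hex_nbr h (Suc k) \<or> b = hex_nbr h k \<and> a = hex_nbr h (Suc k)"
proof -
  let ?D = "{(1,0),(0,1),(-1,1),(-1,0),(0,-1),(1,-1)} :: (int \<times> int) set"
  obtain p q x y z w where cells: "h = (p,q)" "a = (x,y)" "b = (z,w)"
    by (metis surj_pair)
  have "(x-p, y-q) \<in> ?D" "(z-p, w-q) \<in> ?D" "((z-p)-(x-p), (w-q)-(y-q)) \<in> ?D"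
    using assms by (simp_all add: adj_cell_def cells)
  then have "(x-p, y-q, z-p, w-q) \<in> {(1,0,0,1),(0,1,1,0),(0,1,-1,1),(-1,1,0,1),(-1,1,-1,0),(-1,0,-1,1),
      (-1,0,0,-1),(0,-1,-1,0),(0,-1,1,-1),(1,-1,0,-1),(1,-1,1,0),(1,0,1,-1)}"
    by (simp only: insert_iff singleton_iff empty_iff prod.inject) (elim disjE conjE; simp)
  moreover have "x = p + (x-p)" "y = q + (y-q)" "z = p + (z-p)" "w = q + (w-q)" by simp_all
  ultimately show ?thesis
    unfolding cells ex_less_6_iff by (simp add: hex_nbr_def hex_dir_def) (elim disjE; simp)
qed

lemma hex_vertices_eq_image: "hex_vertices h = hex_vertex h ` {..<6}"
proof (intro set_eqI iffI)
  fix v assume "v \<in> hex_vertices h"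
  then have lv: "lattice_vertex v" and "h \<in> v" by (auto simp: hex_vertices_def)
  then obtain a b where ab: "v = {h, a, b}" "a \<noteq> h" "b \<noteq> h" "a \<noteq> b"
    by (auto simp: lattice_vertex_def card_3_iff)
  then have "adj_cell h a" "adj_cell h b" "adj_cell a b" using lv by (auto simp: lattice_vertex_def)
  then obtain k where "k < 6" "v = hex_vertex h k"
    using adj_cell_triangle ab unfolding hex_vertex_def by blast
  then show "v \<in> hex_vertex h ` {..<6}" by blast
next
  fix v assume "v \<in> hex_vertex h ` {..<6}"
  then show "v \<in> hex_vertices h"
    by (auto simp: hex_vertices_def lattice_vertex_hex_vertex) (simp add: hex_vertex_def)
qed

lemma card_hex_vertex_Int_eq_2:
  "i < 6 \<Longrightarrow> j < 6 \<Longrightarrow> card (hex_vertex h i \<inter> hex_vertex h j) = 2 \<Longrightarrow>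
    j = Suc i mod 6 \<or> i = Suc j mod 6"
  by (cases h, drule less_6_cases, drule less_6_cases) (elim disjE; simp add: hex_vertex_def hex_nbr_def hex_dir_def)

lemma hex_edges_eq_image: "hex_edges h = hex_edge h ` {..<6}"
proof (intro set_eqI iffI)
  fix e assume "e \<in> hex_edges h"
  then obtain v w where e: "e = {v, w}" "card (v \<inter> w) = 2"
      and "v \<in> hex_vertices h" "w \<in> hex_vertices h"
    by (auto simp: hex_edges_def lattice_edge_def hex_vertices_def)
  then obtain i j where ij: "i < 6" "j < 6" "v = hex_vertex h i" "w = hex_vertex h j"
    by (auto simp: hex_vertices_eq_image)
  then have "j = Suc i mod 6 \<or> i = Suc j mod 6" using card_hex_vertex_Int_eq_2 e(2) by blast
  then have "e = hex_edge h i \<or> e = hex_edge h j"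
    using e(1) ij by (auto simp: hex_edge_def hex_vertex_mod insert_commute)
  then show "e \<in> hex_edge h ` {..<6}" using ij by auto
next
  fix e assume "e \<in> hex_edge h ` {..<6}"
  then show "e \<in> hex_edges h"
    by (auto simp: hex_edges_def lattice_edge_hex_edge) (auto simp: hex_edge_def hex_vertex_def)
qed

lemma hex_edge_in_hex_edges: "hex_edge h k \<in> hex_edges h"
  by (simp add: hex_edges_def lattice_edge_hex_edge) (auto simp: hex_edge_def hex_vertex_def)

lemma cells_of_hex_edge: "(\<forall>v\<in>hex_edge h k. c \<in> v) \<longleftrightarrow> c = h \<or> c = hex_nbr h (Suc k)"
  using hex_vertex_Int_Suc[of h k] by (auto simp: hex_edge_def hex_vertex_def)

lemma hex_edge_in_hex_edges_nbr: "hex_edge h k \<in> hex_edges (hex_nbr h (Suc k))"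
  using cells_of_hex_edge[of h k "hex_nbr h (Suc k)"] by (simp add: hex_edges_def lattice_edge_hex_edge)

lemma hex_edge_eq_iff: "hex_edge h i = hex_edge h j \<longleftrightarrow> i mod 6 = j mod 6"
proof
  assume "hex_edge h i = hex_edge h j"
  then have "hex_nbr h (Suc j) = h \<or> hex_nbr h (Suc j) = hex_nbr h (Suc i)"
    using cells_of_hex_edge[of h j] cells_of_hex_edge[of h i] by metis
  then show "i mod 6 = j mod 6" using hex_nbr_neq hex_nbr_eq_iff Suc_mod_6_inj by metis
qed (metis hex_edge_mod)

lemma card_hex_edges: "card (hex_edges h) = 6"
proof -
  have "inj_on (hex_edge h) {..<6}" by (auto simp: inj_on_def hex_edge_eq_iff)
  then show ?thesis by (simp add: hex_edges_eq_image card_image)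
qed

lemma finite_hex_edges [simp]: "finite (hex_edges h)"
  by (simp add: hex_edges_eq_image)

lemma hex_edge_subset_hex_vertices: "e \<in> hex_edges h \<Longrightarrow> e \<subseteq> hex_vertices h"
  by (auto simp: hex_edges_def hex_vertices_def lattice_edge_def)

lemma hex_edge_nonempty: "e \<in> hex_edges h \<Longrightarrow> e \<noteq> {}"
  by (auto simp: hex_edges_def lattice_edge_def)

lemma common_hex_edge_unique:
  assumes "a \<noteq> b" "e \<in> hex_edges a \<inter> hex_edges b" "e' \<in> hex_edges a \<inter> hex_edges b"
  shows "e = e'"
proof -
  obtain i j where ij: "e = hex_edge a i" "e' = hex_edge a j"
    using assms(2,3) by (auto simp: hex_edges_eq_image)
  have "b = hex_nbr a (Suc k)" if "hex_edge a k \<in> hex_edges b" for k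
    using that assms(1) cells_of_hex_edge[of a k b] by (simp add: hex_edges_def)
  then have "hex_nbr a (Suc i) = hex_nbr a (Suc j)" using assms(2,3) ij by auto
  then have "Suc i mod 6 = Suc j mod 6" by (simp only: hex_nbr_eq_iff)
  then show ?thesis
    unfolding ij hex_edge_eq_iff by (rule Suc_mod_6_inj)
qed

lemma card_common_hex_edges: "a \<noteq> b \<Longrightarrow> card (hex_edges a \<inter> hex_edges b) \<le> 1"
  using common_hex_edge_unique[of a b] by (subst One_nat_def, subst card_le_Suc0_iff_eq) auto

lemma hex_edges_inj: "hex_edges a = hex_edges b \<Longrightarrow> a = b"
  using card_common_hex_edges[of a b] card_hex_edges[of a] by fastforce

lemma common_hex_vertex_imp_common_edge:
  assumes "a \<noteq> b" "v \<in> hex_vertices a \<inter> hex_vertices b"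
  shows "hex_edges a \<inter> hex_edges b \<noteq> {}"
proof -
  obtain k where k: "v = hex_vertex a k" using assms(2) by (auto simp: hex_vertices_eq_image)
  have "b \<in> v" using assms(2) by (auto simp: hex_vertices_def)
  then have "b = hex_nbr a (Suc (k + 5)) \<or> b = hex_nbr a (Suc k)"
    using assms(1) k by (auto simp: hex_vertex_def hex_nbr_eq_iff)
  then show ?thesis using hex_edge_in_hex_edges_nbr hex_edge_in_hex_edges by blast
qed

definition even_hex_edges :: "cell \<Rightarrow> hedge set" where
  "even_hex_edges h = {hex_edge h 0, hex_edge h 2, hex_edge h 4}"

definition odd_hex_edges :: "cell \<Rightarrow> hedge set" where
  "odd_hex_edges h = {hex_edge h 1, hex_edge h 3, hex_edge h 5}"

lemma hex_edges_eq_6: "hex_edges h = {hex_edge h 0, hex_edge h 1, hex_edge h 2, hex_edge h 3, hex_edge h 4, hex_edge h 5}"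
proof -
  have "{..<6::nat} = {0,1,2,3,4,5}" by auto
  then show ?thesis by (simp add: hex_edges_eq_image)
qed

lemma even_Un_odd_hex_edges: "even_hex_edges h \<union> odd_hex_edges h = hex_edges h"
  by (auto simp: even_hex_edges_def odd_hex_edges_def hex_edges_eq_6)

lemma even_Int_odd_hex_edges: "even_hex_edges h \<inter> odd_hex_edges h = {}"
  by (auto simp: even_hex_edges_def odd_hex_edges_def hex_edge_eq_iff)

lemma card_even_hex_edges: "card (even_hex_edges h) = 3"
  by (simp add: even_hex_edges_def hex_edge_eq_iff)

lemma card_odd_hex_edges: "card (odd_hex_edges h) = 3"
  by (simp add: odd_hex_edges_def hex_edge_eq_iff)

lemma hex_edges_meet_parity:
  assumes "hex_edge h i \<inter> hex_edge h j \<noteq> {}" "hex_edge h i \<noteq> hex_edge h j"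
  shows "even (i mod 6) \<longleftrightarrow> odd (j mod 6)"
proof -
  have "i mod 6 \<noteq> j mod 6" using assms(2) by (simp add: hex_edge_eq_iff)
  moreover from assms(1) have "i mod 6 = j mod 6 \<or> i mod 6 = Suc j mod 6 \<or> Suc i mod 6 = j mod 6 \<or> Suc i mod 6 = Suc j mod 6"
    by (auto simp: hex_edge_def hex_vertex_eq_iff)
  moreover have "\<And>x y::nat. x < 6 \<Longrightarrow> y < 6 \<Longrightarrow> x \<noteq> y \<longrightarrow>
      (x = y \<or> x = Suc y mod 6 \<or> Suc x mod 6 = y \<or> Suc x mod 6 = Suc y mod 6) \<longrightarrow> (even x \<longleftrightarrow> odd y)"
    by (drule less_6_cases)+ (elim disjE; simp)
  ultimately show ?thesis
    using mod_6_reduce[where P="\<lambda>a b c d. a \<noteq> c \<longrightarrow> (a = c \<or> a = d \<or> b = c \<or> b = d) \<longrightarrow> (even a \<longleftrightarrow> odd c)"]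
    by blast
qed

lemma alternating_hex_edge_Suc:
  "alternating M h \<Longrightarrow> hex_edge h (Suc k) \<in> M \<longleftrightarrow> hex_edge h k \<notin> M"
proof -
  have "hex_edge h k \<noteq> hex_edge h (Suc k)"
    using Suc_mod_6_neq[of k] by (simp add: hex_edge_eq_iff)
  moreover have "hex_edge h k \<inter> hex_edge h (Suc k) \<noteq> {}" by (auto simp: hex_edge_def)
  ultimately show "alternating M h \<Longrightarrow> ?thesis"
    unfolding alternating_def using hex_edge_in_hex_edges by blast
qed

lemma alternating_iff:
  "alternating M h \<longleftrightarrow> M \<inter> hex_edges h = even_hex_edges h \<or> M \<inter> hex_edges h = odd_hex_edges h"
proof
  assume alt: "alternating M h"
  have "hex_edge h 1 \<in> M \<longleftrightarrow> hex_edge h 0 \<notin> M" "hex_edge h 2 \<in> M \<longleftrightarrow> hex_edge h 1 \<notin> M"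
    "hex_edge h 3 \<in> M \<longleftrightarrow> hex_edge h 2 \<notin> M" "hex_edge h 4 \<in> M \<longleftrightarrow> hex_edge h 3 \<notin> M"
    "hex_edge h 5 \<in> M \<longleftrightarrow> hex_edge h 4 \<notin> M"
    using alternating_hex_edge_Suc[OF alt, of 0] alternating_hex_edge_Suc[OF alt, of 1]
      alternating_hex_edge_Suc[OF alt, of 2] alternating_hex_edge_Suc[OF alt, of 3]
      alternating_hex_edge_Suc[OF alt, of 4]
    by (simp_all add: eval_nat_numeral)
  then show "M \<inter> hex_edges h = even_hex_edges h \<or> M \<inter> hex_edges h = odd_hex_edges h"
    unfolding hex_edges_eq_6 even_hex_edges_def odd_hex_edges_def
    by (cases "hex_edge h 0 \<in> M") auto
next
  assume M: "M \<inter> hex_edges h = even_hex_edges h \<or> M \<inter> hex_edges h = odd_hex_edges h"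
  show "alternating M h"
    unfolding alternating_def
  proof (intro ballI impI)
    fix e e' assume ee: "e \<in> hex_edges h" "e' \<in> hex_edges h" "e \<noteq> e' \<and> e \<inter> e' \<noteq> {}"
    obtain i j where ij: "e = hex_edge h i" "e' = hex_edge h j" "i < 6" "j < 6"
      using ee by (auto simp: hex_edges_eq_image)
    have parity: "even i \<longleftrightarrow> odd j" using hex_edges_meet_parity[of h i j] ee ij by simp
    have "hex_edge h k \<in> even_hex_edges h \<longleftrightarrow> even k" "hex_edge h k \<in> odd_hex_edges h \<longleftrightarrow> odd k"
      if "k < 6" for k
      using less_6_cases[OF that] by (auto simp: even_hex_edges_def odd_hex_edges_def hex_edge_eq_iff)
    then show "e \<in> M \<longleftrightarrow> e' \<notin> M" using M ee ij parity by blast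
  qed
qed

lemma even_hex_edges_cover: "v \<in> hex_vertices h \<Longrightarrow> \<exists>e\<in>even_hex_edges h. v \<in> e"
proof -
  assume "v \<in> hex_vertices h"
  then obtain i where "v = hex_vertex h i" "i < 6" by (auto simp: hex_vertices_eq_image)
  then show ?thesis
    using less_6_cases[of i] by (auto simp: even_hex_edges_def hex_edge_def hex_vertex_eq_iff)
qed

lemma odd_hex_edges_cover: "v \<in> hex_vertices h \<Longrightarrow> \<exists>e\<in>odd_hex_edges h. v \<in> e"
proof -
  assume "v \<in> hex_vertices h"
  then obtain i where "v = hex_vertex h i" "i < 6" by (auto simp: hex_vertices_eq_image)
  then show ?thesis
    using less_6_cases[of i] by (auto simp: odd_hex_edges_def hex_edge_def hex_vertex_eq_iff)
qed

lemma even_hex_edges_disjoint: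
  "e \<in> even_hex_edges h \<Longrightarrow> e' \<in> even_hex_edges h \<Longrightarrow> e \<noteq> e' \<Longrightarrow> e \<inter> e' = {}"
  using hex_edges_meet_parity[of h] by (fastforce simp: even_hex_edges_def)

lemma odd_hex_edges_disjoint:
  "e \<in> odd_hex_edges h \<Longrightarrow> e' \<in> odd_hex_edges h \<Longrightarrow> e \<noteq> e' \<Longrightarrow> e \<inter> e' = {}"
  using hex_edges_meet_parity[of h] by (fastforce simp: odd_hex_edges_def)

lemma alternating_covers_hex_vertices:
  "alternating M h \<Longrightarrow> v \<in> hex_vertices h \<Longrightarrow> \<exists>e\<in>M \<inter> hex_edges h. v \<in> e"
  using alternating_iff even_hex_edges_cover odd_hex_edges_cover by metis

lemma alternating_not_one_edge_apart:
  assumes "alternating M h" "alternating M' h"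
  shows "M' \<inter> hex_edges h \<noteq> sym_diff (M \<inter> hex_edges h) {e}"
proof
  let ?A = "M \<inter> hex_edges h"
  assume flip: "M' \<inter> hex_edges h = sym_diff ?A {e}"
  have "card ?A = 3" "card (sym_diff ?A {e}) = 3"
    using assms flip alternating_iff card_even_hex_edges card_odd_hex_edges by metis+
  moreover have "sym_diff ?A {e} = (if e \<in> ?A then ?A - {e} else insert e ?A)" by auto
  moreover have "finite ?A" by simp
  ultimately show False by (simp split: if_splits)
qed

lemma sym_diff_cancel_left: "sym_diff A (sym_diff A B) = B"
  by blast

lemma sym_diff_eq_iff: "sym_diff A B = C \<longleftrightarrow> B = sym_diff A C"
  by blast

lemma hex_edges_sym_diff_eq_imp_swapped:
  assumes eq: "sym_diff (hex_edges a) (hex_edges x) = sym_diff (hex_edges b) (hex_edges y)"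
    and "a \<noteq> x" "a \<noteq> b"
  shows "x = b"
proof -
  have "y = a"
  proof (rule ccontr)
    assume "y \<noteq> a"
    \<comment> \<open>then the at least five edges of \<open>a\<close> outside \<open>x\<close> would lie among the at most two edges
      that \<open>a\<close> shares with \<open>b\<close> or \<open>y\<close>\<close>
    have "hex_edges a - hex_edges x \<subseteq> (hex_edges a \<inter> hex_edges b) \<union> (hex_edges a \<inter> hex_edges y)"
      using eq by blast
    then have "card (hex_edges a - hex_edges x) \<le> card ((hex_edges a \<inter> hex_edges b) \<union> (hex_edges a \<inter> hex_edges y))"
      by (intro card_mono) simp_all
    also have "\<dots> \<le> card (hex_edges a \<inter> hex_edges b) + card (hex_edges a \<inter> hex_edges y)"
      by (rule card_Un_le)
    also have "\<dots> \<le> 2"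
      using card_common_hex_edges[OF \<open>a \<noteq> b\<close>] card_common_hex_edges[of a y] \<open>y \<noteq> a\<close> by fastforce
    finally have "card (hex_edges a - hex_edges x) \<le> 2" .
    moreover have "card (hex_edges a - hex_edges x) = 6 - card (hex_edges a \<inter> hex_edges x)"
      using card_Diff_subset_Int[of "hex_edges a" "hex_edges x"] card_hex_edges[of a]
      by (simp add: Diff_Int2 Int_commute)
    ultimately show False using card_common_hex_edges[OF \<open>a \<noteq> x\<close>] by linarith
  qed
  then have "hex_edges x = hex_edges b"
    using eq by blast
  then show ?thesis by (rule hex_edges_inj)
qed

lemma resonance_square:
  assumes "Q1 = sym_diff P (hex_edges a)" "Q2 = sym_diff P (hex_edges b)"
    and "sym_diff Q1 R = hex_edges x" "sym_diff Q2 R = hex_edges y"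
    and "R \<noteq> P" "a \<noteq> b"
  shows "R = sym_diff Q1 (hex_edges b)"
proof -
  have R1: "R = sym_diff P (sym_diff (hex_edges a) (hex_edges x))"
    and R2: "R = sym_diff P (sym_diff (hex_edges b) (hex_edges y))"
    using assms(1-4) by blast+
  then have "sym_diff (hex_edges a) (hex_edges x) = sym_diff (hex_edges b) (hex_edges y)" by blast
  moreover have "a \<noteq> x" using R1 \<open>R \<noteq> P\<close> by blast
  ultimately have "x = b" using hex_edges_sym_diff_eq_imp_swapped \<open>a \<noteq> b\<close> by blast
  then show ?thesis using assms(3) by blast
qed

lemma hs_edge_subset_hs_vertices: "e \<in> hs_edges S \<Longrightarrow> e \<subseteq> hs_vertices S"
  using hex_edge_subset_hex_vertices by (fastforce simp: hs_edges_def hs_vertices_def)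

lemma perfect_matching_disjoint:
  assumes "perfect_matching S M" "e \<in> M" "e' \<in> M" "e \<noteq> e'"
  shows "e \<inter> e' = {}"
  using assms hs_edge_subset_hs_vertices by (fastforce simp: perfect_matching_def)

lemma alternating_if_sym_diff_eq_hex_edges:
  assumes "perfect_matching S M" "perfect_matching S M'" "sym_diff M M' = hex_edges h"
  shows "alternating M h"
  unfolding alternating_def
proof (intro ballI impI)
  fix e e' assume ee: "e \<in> hex_edges h" "e' \<in> hex_edges h" "e \<noteq> e' \<and> e \<inter> e' \<noteq> {}"
  have "\<not> (e \<in> M \<and> e' \<in> M)" "\<not> (e \<in> M' \<and> e' \<in> M')"
    using perfect_matching_disjoint[OF assms(1)] perfect_matching_disjoint[OF assms(2)] ee by blast+
  then show "e \<in> M \<longleftrightarrow> e' \<notin> M" using ee assms(3) by blast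
qed

section \<open>The cube of a Clar cover\<close>

definition hexagon_edges :: "cell set \<Rightarrow> hedge set" where
  "hexagon_edges D = (\<Union>h\<in>D. hex_edges h)"

lemma hexagon_edges_eq_empty_iff [simp]: "hexagon_edges D = {} \<longleftrightarrow> D = {}"
proof -
  have "hex_edges h \<noteq> {}" for h using card_hex_edges[of h] by auto
  then show ?thesis by (auto simp: hexagon_edges_def)
qed

lemma hexagon_edges_insert_disjoint:
  "hex_edges h \<inter> hexagon_edges D = {} \<Longrightarrow>
    hexagon_edges (insert h D) = sym_diff (hexagon_edges D) (hex_edges h)"
  by (auto simp: hexagon_edges_def)

lemma hexagon_edges_eq_hex_edges_iff: "hexagon_edges D = hex_edges s \<longleftrightarrow> D = {s}"
proof
  assume D: "hexagon_edges D = hex_edges s"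
  have "h = s" if "h \<in> D" for h
  proof (rule ccontr)
    assume "h \<noteq> s"
    have "hex_edges h \<inter> hex_edges s = hex_edges h" using that D unfolding hexagon_edges_def by blast
    then show False using card_common_hex_edges[OF \<open>h \<noteq> s\<close>] card_hex_edges[of h] by simp
  qed
  moreover have "D \<noteq> {}" using D card_hex_edges[of s] by (auto simp: hexagon_edges_def)
  ultimately show "D = {s}" by blast
qed (simp add: hexagon_edges_def)

lemma disjoint_hex_edges_if_disjoint_hex_vertices:
  "hex_vertices a \<inter> hex_vertices b = {} \<Longrightarrow> hex_edges a \<inter> hex_edges b = {}"
  using hex_edge_subset_hex_vertices hex_edge_nonempty by blast

lemma hex_edges_subset_hs_edges: "h \<in> S \<Longrightarrow> hex_edges h \<subseteq> hs_edges S"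
  by (auto simp: hs_edges_def)

lemma graph_iso_sym:
  assumes "graph_iso V1 adj1 V2 adj2"
  shows "graph_iso V2 adj2 V1 adj1"
proof -
  obtain \<phi> where \<phi>: "bij_betw \<phi> V1 V2" and adj: "\<forall>x\<in>V1. \<forall>y\<in>V1. adj1 x y \<longleftrightarrow> adj2 (\<phi> x) (\<phi> y)"
    using assms by (auto simp: graph_iso_def)
  have "adj2 x y \<longleftrightarrow> adj1 (inv_into V1 \<phi> x) (inv_into V1 \<phi> y)" if "x \<in> V2" "y \<in> V2" for x y
  proof -
    have "inv_into V1 \<phi> x \<in> V1" "inv_into V1 \<phi> y \<in> V1"
      using bij_betw_apply[OF bij_betw_inv_into[OF \<phi>]] that by blast+
    moreover have "\<phi> (inv_into V1 \<phi> x) = x" "\<phi> (inv_into V1 \<phi> y) = y"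
      using bij_betw_inv_into_right[OF \<phi>] that by blast+
    ultimately show ?thesis using adj by metis
  qed
  then show ?thesis using bij_betw_inv_into[OF \<phi>] by (auto simp: graph_iso_def)
qed

locale clar =
  fixes S :: "cell set" and K :: "cell set" and F :: "hedge set"
  assumes clar_cover: "clar_cover S K F"
begin

lemma hexagons_subset: "K \<subseteq> S"
  and edges_subset: "F \<subseteq> hs_edges S"
  and hexagons_disjoint: "h \<in> K \<Longrightarrow> h' \<in> K \<Longrightarrow> h \<noteq> h' \<Longrightarrow> hex_vertices h \<inter> hex_vertices h' = {}"
  and edges_disjoint: "e \<in> F \<Longrightarrow> e' \<in> F \<Longrightarrow> e \<noteq> e' \<Longrightarrow> e \<inter> e' = {}"
  and edge_hexagon_disjoint: "e \<in> F \<Longrightarrow> h \<in> K \<Longrightarrow> e \<inter> hex_vertices h = {}"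
  and covers: "(\<Union>h\<in>K. hex_vertices h) \<union> \<Union>F = hs_vertices S"
  using clar_cover by (simp_all add: clar_cover_def)

lemma hexagon_edges_disjoint: "h \<in> K \<Longrightarrow> h' \<in> K \<Longrightarrow> h \<noteq> h' \<Longrightarrow> hex_edges h \<inter> hex_edges h' = {}"
  by (rule disjoint_hex_edges_if_disjoint_hex_vertices[OF hexagons_disjoint])

lemma edge_not_in_hexagon: "e \<in> F \<Longrightarrow> h \<in> K \<Longrightarrow> e \<notin> hex_edges h"
  using edge_hexagon_disjoint[of e h] hex_edge_subset_hex_vertices[of e h] hex_edge_nonempty[of e h]
  by blast

definition orient :: "cell set \<Rightarrow> cell \<Rightarrow> hedge set" where
  "orient B h = (if h \<in> B then odd_hex_edges h else even_hex_edges h)"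

definition clar_matching :: "cell set \<Rightarrow> hedge set" where
  "clar_matching B = F \<union> (\<Union>h\<in>K. orient B h)"

lemma orient_subset: "orient B h \<subseteq> hex_edges h"
  using even_Un_odd_hex_edges[of h] by (auto simp: orient_def)

lemma clar_matching_Int_hex_edges:
  assumes "h \<in> K"
  shows "clar_matching B \<inter> hex_edges h = orient B h"
proof -
  have "F \<inter> hex_edges h = {}" using edge_not_in_hexagon assms by blast
  moreover have "orient B h' \<inter> hex_edges h = {}" if "h' \<in> K" "h' \<noteq> h" for h'
    using hexagon_edges_disjoint[OF that(1) assms that(2)] orient_subset[of B h'] by blast
  ultimately show ?thesis using orient_subset[of B h] assms unfolding clar_matching_def by blast
qed

lemma clar_matching_disjoint:
  assumes "e \<in> clar_matching B" "e' \<in> clar_matching B" "e \<noteq> e'"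
  shows "e \<inter> e' = {}"
proof -
  have in_hex: "x \<subseteq> hex_vertices h" if "x \<in> orient B h" for x h
    using that orient_subset hex_edge_subset_hex_vertices by blast
  consider "e \<in> F" "e' \<in> F" | h' where "e \<in> F" "h' \<in> K" "e' \<in> orient B h'"
    | h where "h \<in> K" "e \<in> orient B h" "e' \<in> F"
    | h h' where "h \<in> K" "e \<in> orient B h" "h' \<in> K" "e' \<in> orient B h'"
    using assms(1,2) unfolding clar_matching_def by blast
  then show ?thesis
  proof cases
    case 1 then show ?thesis using edges_disjoint assms(3) by blast
  next
    case (2 h')
    then show ?thesis using edge_hexagon_disjoint[of e h'] in_hex[of e' h'] by blast
  next
    case (3 h)
    then show ?thesis using edge_hexagon_disjoint[of e' h] in_hex[of e h] by blast
  next
    case (4 h h')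
    show ?thesis
    proof (cases "h = h'")
      case True
      then show ?thesis using 4 even_hex_edges_disjoint odd_hex_edges_disjoint assms(3)
        unfolding orient_def by (cases "h \<in> B") auto
    next
      case False
      then show ?thesis using hexagons_disjoint[OF 4(1,3)] in_hex[OF 4(2)] in_hex[OF 4(4)] by blast
    qed
  qed
qed

lemma perfect_matching_clar_matching: "perfect_matching S (clar_matching B)"
  unfolding perfect_matching_def
proof (intro conjI ballI)
  show "clar_matching B \<subseteq> hs_edges S"
    using edges_subset hexagons_subset orient_subset hex_edges_subset_hs_edges
    unfolding clar_matching_def by blast
next
  fix v assume "v \<in> hs_vertices S"
  with covers consider h where "h \<in> K" "v \<in> hex_vertices h" | e where "e \<in> F" "v \<in> e"
    by blast
  then have "\<exists>e. e \<in> clar_matching B \<and> v \<in> e"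
  proof cases
    case 1
    then obtain e where "e \<in> orient B h" "v \<in> e"
      using even_hex_edges_cover[OF 1(2)] odd_hex_edges_cover[OF 1(2)] unfolding orient_def
      by (cases "h \<in> B") auto
    then show ?thesis using 1 unfolding clar_matching_def by blast
  qed (auto simp: clar_matching_def)
  then show "\<exists>!e. e \<in> clar_matching B \<and> v \<in> e" using clar_matching_disjoint by blast
qed

lemma clar_matching_in_f_set: "clar_matching B \<in> f_set S K F"
  unfolding f_set_def
proof (intro CollectI conjI ballI)
  fix h assume "h \<in> K"
  then show "alternating (clar_matching B) h"
    using clar_matching_Int_hex_edges unfolding alternating_iff orient_def by (cases "h \<in> B") auto
qed (use perfect_matching_clar_matching in \<open>auto simp: clar_matching_def\<close>)

lemma f_set_edge_outside_hexagons:
  assumes M: "M \<in> f_set S K F" and "e \<in> M" and outside: "\<forall>h\<in>K. e \<notin> hex_edges h"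
  shows "e \<in> F"
proof -
  have pm: "perfect_matching S M" and alt: "\<forall>h\<in>K. alternating M h" and "F \<subseteq> M"
    using M by (auto simp: f_set_def)
  have "e \<in> hs_edges S" using pm \<open>e \<in> M\<close> by (auto simp: perfect_matching_def)
  moreover from this obtain v where "v \<in> e"
    unfolding hs_edges_def using hex_edge_nonempty by blast
  ultimately have "v \<in> e" "v \<in> hs_vertices S" using hs_edge_subset_hs_vertices by blast+
  with covers consider h where "h \<in> K" "v \<in> hex_vertices h" | f where "f \<in> F" "v \<in> f"
    by blast
  then show ?thesis
  proof cases
    case 1
    then obtain e' where "e' \<in> M \<inter> hex_edges h" "v \<in> e'"
      using alternating_covers_hex_vertices alt by blast
    then show ?thesis
      using perfect_matching_disjoint[OF pm \<open>e \<in> M\<close>] \<open>v \<in> e\<close> outside 1(1) by blast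
  next
    case 2
    then show ?thesis
      using perfect_matching_disjoint[OF pm \<open>e \<in> M\<close>] \<open>v \<in> e\<close> \<open>F \<subseteq> M\<close> by blast
  qed
qed

lemma f_set_eq_clar_matching:
  assumes M: "M \<in> f_set S K F"
  shows "M = clar_matching {h\<in>K. M \<inter> hex_edges h = odd_hex_edges h}" (is "M = clar_matching ?B")
proof -
  have orient: "M \<inter> hex_edges h = orient ?B h" if "h \<in> K" for h
    using M that by (auto simp: f_set_def alternating_iff orient_def)
  show ?thesis
  proof
    show "M \<subseteq> clar_matching ?B"
    proof
      fix e assume "e \<in> M"
      show "e \<in> clar_matching ?B"
      proof (cases "\<exists>h\<in>K. e \<in> hex_edges h")
        case True
        then show ?thesis using orient \<open>e \<in> M\<close> unfolding clar_matching_def by blast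
      next
        case False
        then show ?thesis
          using f_set_edge_outside_hexagons[OF M \<open>e \<in> M\<close>] unfolding clar_matching_def by blast
      qed
    qed
    show "clar_matching ?B \<subseteq> M"
      using orient M orient_subset unfolding clar_matching_def f_set_def by blast
  qed
qed

lemma f_set_eq_image: "f_set S K F = clar_matching ` Pow K"
  using f_set_eq_clar_matching clar_matching_in_f_set by blast

lemma sym_diff_clar_matching:
  assumes "B \<subseteq> K" "C \<subseteq> K"
  shows "sym_diff (clar_matching B) (clar_matching C) = hexagon_edges (sym_diff B C)"
proof -
  have "e \<in> sym_diff (clar_matching B) (clar_matching C) \<longleftrightarrow> e \<in> hexagon_edges (sym_diff B C)" for e
  proof (cases "\<exists>h\<in>K. e \<in> hex_edges h")
    case True
    then obtain h where h: "h \<in> K" "e \<in> hex_edges h" by blast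
    have "e \<in> clar_matching B \<longleftrightarrow> e \<in> orient B h" "e \<in> clar_matching C \<longleftrightarrow> e \<in> orient C h"
      using clar_matching_Int_hex_edges[OF h(1)] h(2) by blast+
    moreover have "e \<in> orient B h \<longleftrightarrow> e \<notin> orient C h \<longleftrightarrow> h \<in> sym_diff B C"
      using h(2) even_Un_odd_hex_edges[of h] even_Int_odd_hex_edges[of h] by (auto simp: orient_def)
    moreover have "e \<in> hexagon_edges (sym_diff B C) \<longleftrightarrow> h \<in> sym_diff B C"
    proof -
      have "h' = h" if "h' \<in> sym_diff B C" "e \<in> hex_edges h'" for h'
        using hexagon_edges_disjoint[of h' h] that h assms by blast
      then show ?thesis using h(2) unfolding hexagon_edges_def by blast
    qed
    ultimately show ?thesis by blast
  next
    case False
    then have "e \<in> clar_matching B \<longleftrightarrow> e \<in> F" "e \<in> clar_matching C \<longleftrightarrow> e \<in> F"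
      using orient_subset unfolding clar_matching_def by blast+
    moreover have "e \<notin> hexagon_edges (sym_diff B C)"
      using False assms unfolding hexagon_edges_def by blast
    ultimately show ?thesis by blast
  qed
  then show ?thesis by blast
qed

lemma inj_on_clar_matching: "inj_on clar_matching (Pow K)"
proof (rule inj_onI)
  fix B C assume "B \<in> Pow K" "C \<in> Pow K" and eq: "clar_matching B = clar_matching C"
  then have "hexagon_edges (sym_diff B C) = sym_diff (clar_matching B) (clar_matching C)"
    by (intro sym_diff_clar_matching[symmetric]) auto
  also have "\<dots> = {}" unfolding eq by blast
  finally have "sym_diff B C = {}" by (simp only: hexagon_edges_eq_empty_iff)
  then show "B = C" by blast
qed

lemma res_adj_clar_matching_iff:
  assumes "B \<subseteq> K" "C \<subseteq> K"
  shows "res_adj S (clar_matching B) (clar_matching C) \<longleftrightarrow> card (sym_diff B C) = 1"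
proof -
  have "res_adj S (clar_matching B) (clar_matching C) \<longleftrightarrow> (\<exists>s\<in>S. sym_diff B C = {s})"
    unfolding res_adj_def sym_diff_clar_matching[OF assms] hexagon_edges_eq_hex_edges_iff ..
  also have "\<dots> \<longleftrightarrow> (\<exists>s. sym_diff B C = {s})" using assms hexagons_subset by blast
  finally show ?thesis by (simp add: card_1_singleton_iff)
qed

lemma hexagons_eq_flips:
  "K = {s. \<exists>M\<in>f_set S K F. \<exists>M'\<in>f_set S K F. sym_diff M M' = hex_edges s}"
proof (intro set_eqI iffI CollectI)
  fix s assume "s \<in> K"
  then have "sym_diff (clar_matching {}) (clar_matching {s}) = hex_edges s"
    using sym_diff_clar_matching[of "{}" "{s}"] by (simp add: hexagon_edges_def)
  then show "\<exists>M\<in>f_set S K F. \<exists>M'\<in>f_set S K F. sym_diff M M' = hex_edges s"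
    using clar_matching_in_f_set by blast
next
  fix s assume "s \<in> {s. \<exists>M\<in>f_set S K F. \<exists>M'\<in>f_set S K F. sym_diff M M' = hex_edges s}"
  then obtain B C where "B \<subseteq> K" "C \<subseteq> K" "sym_diff (clar_matching B) (clar_matching C) = hex_edges s"
    unfolding f_set_eq_image by blast
  then have "sym_diff B C = {s}"
    using sym_diff_clar_matching hexagon_edges_eq_hex_edges_iff by metis
  then show "s \<in> K" using \<open>B \<subseteq> K\<close> \<open>C \<subseteq> K\<close> by blast
qed

lemma edges_eq_Inter_f_set: "F = \<Inter> (f_set S K F)"
proof
  show "F \<subseteq> \<Inter> (f_set S K F)" by (auto simp: f_set_def)
next
  have "clar_matching {} \<inter> clar_matching K \<subseteq> F"
  proof
    fix e assume e: "e \<in> clar_matching {} \<inter> clar_matching K"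
    have "e \<notin> hex_edges h" if "h \<in> K" for h
      using e clar_matching_Int_hex_edges[OF that, of "{}"] clar_matching_Int_hex_edges[OF that, of K]
        even_Int_odd_hex_edges[of h] that
      unfolding orient_def by auto
    then show "e \<in> F" using e orient_subset unfolding clar_matching_def by blast
  qed
  then show "\<Inter> (f_set S K F) \<subseteq> F" using clar_matching_in_f_set by blast
qed

lemma f_set_iso_cube:
  assumes "finite K"
  shows "graph_iso (f_set S K F) (res_adj S) (cube_vertices (card K)) cube_adj"
proof -
  obtain g where g: "bij_betw g {..<card K} K"
    using assms by (metis ex_bij_betw_nat_finite lessThan_atLeast0)
  have cube_to_f_set: "bij_betw (clar_matching \<circ> image g) (Pow {..<card K}) (f_set S K F)"
  proof (rule bij_betw_trans[OF bij_betw_Pow[OF g]])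
    show "bij_betw clar_matching (Pow K) (f_set S K F)"
      using inj_on_clar_matching by (simp add: f_set_eq_image bij_betw_def)
  qed
  have "cube_adj A B \<longleftrightarrow> res_adj S ((clar_matching \<circ> image g) A) ((clar_matching \<circ> image g) B)"
    if "A \<in> Pow {..<card K}" "B \<in> Pow {..<card K}" for A B
  proof -
    have inj: "inj_on g {..<card K}" using g by (simp add: bij_betw_def)
    then have "g ` sym_diff A B = sym_diff (g ` A) (g ` B)"
      using that unfolding inj_on_def by blast
    moreover have "card (g ` sym_diff A B) = card (sym_diff A B)"
      using that by (intro card_image inj_on_subset[OF inj]) auto
    moreover have "g ` A \<subseteq> K" "g ` B \<subseteq> K" using g that by (auto simp: bij_betw_def)
    ultimately show ?thesis by (simp add: cube_adj_def res_adj_clar_matching_iff)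
  qed
  with cube_to_f_set have "graph_iso (cube_vertices (card K)) cube_adj (f_set S K F) (res_adj S)"
    unfolding graph_iso_def cube_vertices_def by blast
  then show ?thesis by (rule graph_iso_sym)
qed

end

section \<open>Induced cubes of the resonance graph\<close>

locale resonance_cube =
  fixes S :: "cell set" and n :: nat and X :: "hedge set set" and \<psi> :: "nat set \<Rightarrow> hedge set"
  assumes matchings: "X \<subseteq> {M. perfect_matching S M}"
    and bij: "bij_betw \<psi> (Pow {..<n}) X"
    and adj: "\<forall>A\<in>Pow {..<n}. \<forall>B\<in>Pow {..<n}. cube_adj A B \<longleftrightarrow> res_adj S (\<psi> A) (\<psi> B)"
begin

definition base :: "hedge set" where
  "base = \<psi> {}"

definition flip_hex :: "nat \<Rightarrow> cell" where
  "flip_hex i = (SOME s. s \<in> S \<and> sym_diff base (\<psi> {i}) = hex_edges s)"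

lemma perfect_matching_vertex: "A \<subseteq> {..<n} \<Longrightarrow> perfect_matching S (\<psi> A)"
  using bij matchings by (auto simp: bij_betw_def)

lemma perfect_matching_base: "perfect_matching S base"
  unfolding base_def by (simp add: perfect_matching_vertex)

lemma vertex_inj: "A \<subseteq> {..<n} \<Longrightarrow> B \<subseteq> {..<n} \<Longrightarrow> \<psi> A = \<psi> B \<Longrightarrow> A = B"
  using bij by (auto simp: bij_betw_def inj_on_def)

lemma res_adj_vertex:
  "A \<subseteq> {..<n} \<Longrightarrow> B \<subseteq> {..<n} \<Longrightarrow> card (sym_diff A B) = 1 \<Longrightarrow>
    \<exists>s\<in>S. sym_diff (\<psi> A) (\<psi> B) = hex_edges s"
  using adj by (auto simp: cube_adj_def res_adj_def)

lemma flip_hex_spec: "i < n \<Longrightarrow> flip_hex i \<in> S \<and> sym_diff base (\<psi> {i}) = hex_edges (flip_hex i)"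
  unfolding flip_hex_def base_def
  by (rule someI_ex) (use res_adj_vertex[of "{}" "{i}"] in auto)

lemma vertex_singleton: "i < n \<Longrightarrow> \<psi> {i} = sym_diff base (hex_edges (flip_hex i))"
  using flip_hex_spec by blast

lemma flip_hex_inj: "i < n \<Longrightarrow> j < n \<Longrightarrow> flip_hex i = flip_hex j \<Longrightarrow> i = j"
  using vertex_singleton vertex_inj[of "{i}" "{j}"] by auto

lemma alternating_base_flip_hex: "i < n \<Longrightarrow> alternating base (flip_hex i)"
  using alternating_if_sym_diff_eq_hex_edges perfect_matching_base perfect_matching_vertex[of "{i}"]
    flip_hex_spec by auto

text \<open>If two of the flipped hexagons met, they would share exactly one edge \<open>e\<close>. Completing the
  square \<open>base, \<psi> {i}, \<psi> {i, j}, \<psi> {j}\<close> shows that \<open>flip_hex j\<close> is alternating both in \<open>base\<close>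
  and in \<open>\<psi> {i}\<close>, although on its edges these two matchings differ in \<open>e\<close> only.\<close>

lemma flip_hexes_disjoint:
  assumes "i < n" "j < n" "i \<noteq> j"
  shows "hex_vertices (flip_hex i) \<inter> hex_vertices (flip_hex j) = {}"
proof (rule ccontr)
  assume meet: "hex_vertices (flip_hex i) \<inter> hex_vertices (flip_hex j) \<noteq> {}"
  have distinct: "flip_hex i \<noteq> flip_hex j" using flip_hex_inj assms by blast
  let ?R = "\<psi> {i, j}"
  have ij: "{i, j} \<subseteq> {..<n}" using assms by auto
  have "sym_diff {i} {i, j} = {j}" "sym_diff {j} {i, j} = {i}" using assms(3) by auto
  then obtain x y where x: "sym_diff (\<psi> {i}) ?R = hex_edges x"
    and y: "sym_diff (\<psi> {j}) ?R = hex_edges y"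
    using res_adj_vertex[of "{i}" "{i, j}"] res_adj_vertex[of "{j}" "{i, j}"] assms ij by auto
  have "?R \<noteq> base" using vertex_inj[OF ij, of "{}"] unfolding base_def by blast
  then have R: "?R = sym_diff (\<psi> {i}) (hex_edges (flip_hex j))"
    by (rule resonance_square[OF vertex_singleton[OF assms(1)] vertex_singleton[OF assms(2)] x y _ distinct])
  have "sym_diff (\<psi> {i}) ?R = hex_edges (flip_hex j)"
    by (simp only: R sym_diff_cancel_left)
  then have alt: "alternating (\<psi> {i}) (flip_hex j)"
    using ij assms(1) perfect_matching_vertex[of "{i}"] perfect_matching_vertex[of "{i, j}"]
    by (intro alternating_if_sym_diff_eq_hex_edges[of S]) auto
  from meet obtain v where "v \<in> hex_vertices (flip_hex i) \<inter> hex_vertices (flip_hex j)" by blast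
  then obtain e where "e \<in> hex_edges (flip_hex i) \<inter> hex_edges (flip_hex j)"
    using common_hex_vertex_imp_common_edge[OF distinct] by blast
  then have "hex_edges (flip_hex i) \<inter> hex_edges (flip_hex j) = {e}"
    using common_hex_edge_unique[OF distinct] by blast
  then have "\<psi> {i} \<inter> hex_edges (flip_hex j) = sym_diff (base \<inter> hex_edges (flip_hex j)) {e}"
    unfolding vertex_singleton[OF assms(1)] by blast
  then show False
    using alternating_not_one_edge_apart[OF alternating_base_flip_hex[OF assms(2)] alt] by blast
qed

lemma flip_hex_edges_disjoint:
  assumes "i < n" "B \<subseteq> {..<n}" "i \<notin> B"
  shows "hex_edges (flip_hex i) \<inter> hexagon_edges (flip_hex ` B) = {}"
proof -
  have "hex_edges (flip_hex i) \<inter> hex_edges (flip_hex k) = {}" if "k \<in> B" for k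
    using that assms by (intro disjoint_hex_edges_if_disjoint_hex_vertices flip_hexes_disjoint) auto
  then show ?thesis unfolding hexagon_edges_def by blast
qed

lemma hexagon_edges_flip_hex_insert:
  assumes "i < n" "B \<subseteq> {..<n}" "i \<notin> B"
  shows "hexagon_edges (flip_hex ` insert i B) = sym_diff (hexagon_edges (flip_hex ` B)) (hex_edges (flip_hex i))"
  using hexagon_edges_insert_disjoint[OF flip_hex_edges_disjoint[OF assms]] by simp

lemma vertex_eq_from_square:
  assumes A: "A \<subseteq> {..<n}" and ij: "i \<in> A" "j \<in> A" "i \<noteq> j"
    and IH: "\<And>C. C \<in> {A - {i, j}, A - {j}, A - {i}} \<Longrightarrow> \<psi> C = sym_diff base (hexagon_edges (flip_hex ` C))"
  shows "\<psi> A = sym_diff base (hexagon_edges (flip_hex ` A))"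
proof -
  define B where "B = A - {i, j}"
  let ?E = "\<lambda>C. hexagon_edges (flip_hex ` C)"
  have B: "B \<subseteq> {..<n}" "i \<notin> B" "j \<notin> B" "i < n" "j < n" using A ij by (auto simp: B_def)
  have faces: "A - {j} = insert i B" "A - {i} = insert j B" "A = insert j (insert i B)"
    using ij by (auto simp: B_def)
  have \<psi>B: "\<psi> B = sym_diff base (?E B)" using IH B_def by blast
  have insert: "\<psi> (insert k B) = sym_diff (\<psi> B) (hex_edges (flip_hex k))"
    if "k \<in> {i, j}" "insert k B \<in> {A - {i, j}, A - {j}, A - {i}}" for k
  proof -
    have "\<psi> (insert k B) = sym_diff base (?E (insert k B))" using IH that(2) by blast
    also have "\<dots> = sym_diff base (sym_diff (?E B) (hex_edges (flip_hex k)))"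
      using hexagon_edges_flip_hex_insert[of k B] B that(1) by auto
    finally show ?thesis unfolding \<psi>B by blast
  qed
  have Q1: "\<psi> (A - {j}) = sym_diff (\<psi> B) (hex_edges (flip_hex i))"
    using insert[of i] faces by simp
  have Q2: "\<psi> (A - {i}) = sym_diff (\<psi> B) (hex_edges (flip_hex j))"
    using insert[of j] faces by simp
  have "sym_diff (A - {j}) A = {j}" "sym_diff (A - {i}) A = {i}" using ij by auto
  then have "card (sym_diff (A - {j}) A) = 1" "card (sym_diff (A - {i}) A) = 1" by simp_all
  moreover have "A - {j} \<subseteq> {..<n}" "A - {i} \<subseteq> {..<n}" using A by blast+
  ultimately obtain x y where x: "sym_diff (\<psi> (A - {j})) (\<psi> A) = hex_edges x"
    and y: "sym_diff (\<psi> (A - {i})) (\<psi> A) = hex_edges y"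
    using res_adj_vertex A by meson
  have "\<psi> A \<noteq> \<psi> B" using vertex_inj[OF A B(1)] ij unfolding B_def by blast
  moreover have "flip_hex i \<noteq> flip_hex j" using flip_hex_inj B ij by blast
  ultimately have "\<psi> A = sym_diff (\<psi> (A - {j})) (hex_edges (flip_hex j))"
    by (rule resonance_square[OF Q1 Q2 x y])
  also have "\<dots> = sym_diff base (sym_diff (sym_diff (?E B) (hex_edges (flip_hex i))) (hex_edges (flip_hex j)))"
    unfolding Q1 \<psi>B by blast
  also have "\<dots> = sym_diff base (?E A)"
    using hexagon_edges_flip_hex_insert[of i B] hexagon_edges_flip_hex_insert[of j "insert i B"] B ij
    unfolding faces(3) by simp
  finally show ?thesis .
qed

lemma vertex_eq: "A \<subseteq> {..<n} \<Longrightarrow> \<psi> A = sym_diff base (hexagon_edges (flip_hex ` A))"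
proof (induction "card A" arbitrary: A rule: less_induct)
  case less
  have "finite A" using less.prems finite_subset by blast
  show ?case
  proof (cases "card A \<le> 1")
    case True
    then consider "A = {}" | i where "A = {i}"
      using \<open>finite A\<close> by (metis One_nat_def card_0_eq card_1_singleton_iff le_Suc_eq le_zero_eq)
    then show ?thesis
      using vertex_singleton less.prems by cases (auto simp: base_def hexagon_edges_def)
  next
    case False
    then obtain i j where ij: "i \<in> A" "j \<in> A" "i \<noteq> j"
      by (metis One_nat_def card_le_Suc0_iff_eq \<open>finite A\<close> not_less_eq_eq)
    have "card C < card A" "C \<subseteq> {..<n}" if "C \<in> {A - {i, j}, A - {j}, A - {i}}" for C
      using that ij less.prems \<open>finite A\<close> by (auto intro: psubset_card_mono)
    then show ?thesis by (intro vertex_eq_from_square[OF less.prems ij] less.hyps)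
  qed
qed

definition cube_hexagons :: "cell set" where
  "cube_hexagons = flip_hex ` {..<n}"

definition cube_edges :: "hedge set" where
  "cube_edges = base - hexagon_edges cube_hexagons"

lemma card_cube_hexagons: "card cube_hexagons = n"
  unfolding cube_hexagons_def using flip_hex_inj by (subst card_image) (auto simp: inj_on_def)

lemma cube_hexagons_subset: "cube_hexagons \<subseteq> S"
  using flip_hex_spec unfolding cube_hexagons_def by auto

lemma cube_cover_covers_vertices: "(\<Union>h\<in>cube_hexagons. hex_vertices h) \<union> \<Union>cube_edges = hs_vertices S"
proof
  have "hex_vertices h \<subseteq> hs_vertices S" if "h \<in> cube_hexagons" for h
    using that cube_hexagons_subset by (auto simp: hs_vertices_def)
  moreover have "e \<subseteq> hs_vertices S" if "e \<in> cube_edges" for e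
    using that perfect_matching_base hs_edge_subset_hs_vertices
    unfolding cube_edges_def perfect_matching_def by blast
  ultimately show "(\<Union>h\<in>cube_hexagons. hex_vertices h) \<union> \<Union>cube_edges \<subseteq> hs_vertices S" by blast
next
  show "hs_vertices S \<subseteq> (\<Union>h\<in>cube_hexagons. hex_vertices h) \<union> \<Union>cube_edges"
  proof
    fix v assume "v \<in> hs_vertices S"
    then obtain e where e: "e \<in> base" "v \<in> e" using perfect_matching_base unfolding perfect_matching_def by blast
    show "v \<in> (\<Union>h\<in>cube_hexagons. hex_vertices h) \<union> \<Union>cube_edges"
    proof (cases "e \<in> hexagon_edges cube_hexagons")
      case True
      then obtain h where "h \<in> cube_hexagons" "e \<in> hex_edges h" unfolding hexagon_edges_def by blast
      then show ?thesis using hex_edge_subset_hex_vertices e(2) by blast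
    next
      case False
      then show ?thesis using e unfolding cube_edges_def by blast
    qed
  qed
qed

lemma clar_cover_cube: "clar_cover S cube_hexagons cube_edges"
  unfolding clar_cover_def
proof (intro conjI ballI impI cube_hexagons_subset cube_cover_covers_vertices)
  show "cube_edges \<subseteq> hs_edges S"
    using perfect_matching_base unfolding cube_edges_def perfect_matching_def by blast
next
  fix h h' assume "h \<in> cube_hexagons" "h' \<in> cube_hexagons" "h \<noteq> h'"
  then show "hex_vertices h \<inter> hex_vertices h' = {}"
    using flip_hexes_disjoint unfolding cube_hexagons_def by auto
next
  fix e e' assume "e \<in> cube_edges" "e' \<in> cube_edges" "e \<noteq> e'"
  then show "e \<inter> e' = {}"
    using perfect_matching_disjoint[OF perfect_matching_base, of e e'] unfolding cube_edges_def by blast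
next
  fix e h assume e: "e \<in> cube_edges" and h: "h \<in> cube_hexagons"
  show "e \<inter> hex_vertices h = {}"
  proof (rule ccontr)
    assume "e \<inter> hex_vertices h \<noteq> {}"
    then obtain v where v: "v \<in> e" "v \<in> hex_vertices h" by blast
    have "alternating base h" using h alternating_base_flip_hex unfolding cube_hexagons_def by auto
    then obtain e' where e': "e' \<in> base" "e' \<in> hex_edges h" "v \<in> e'"
      using alternating_covers_hex_vertices[OF _ v(2)] by blast
    have "e \<notin> hex_edges h" using e h unfolding cube_edges_def hexagon_edges_def by blast
    then have "e \<noteq> e'" using e' by blast
    moreover have "e \<in> base" using e unfolding cube_edges_def by blast
    ultimately show False
      using perfect_matching_disjoint[OF perfect_matching_base _ e'(1)] v(1) e'(3) by blast
  qed
qed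

lemma f_set_cube: "f_set S cube_hexagons cube_edges = X"
proof -
  interpret clar S cube_hexagons cube_edges by (rule clar.intro) (rule clar_cover_cube)
  have "base \<in> f_set S cube_hexagons cube_edges"
    using perfect_matching_base alternating_base_flip_hex
    unfolding f_set_def cube_hexagons_def cube_edges_def by auto
  then obtain C0 where C0: "C0 \<subseteq> cube_hexagons" "base = clar_matching C0"
    unfolding f_set_eq_image by blast
  have flipped: "clar_matching (sym_diff C0 (flip_hex ` A)) = \<psi> A" if "A \<subseteq> {..<n}" for A
  proof -
    have "flip_hex ` A \<subseteq> cube_hexagons" using that unfolding cube_hexagons_def by auto
    then have "sym_diff C0 (flip_hex ` A) \<subseteq> cube_hexagons" using C0(1) by blast
    then have "sym_diff base (clar_matching (sym_diff C0 (flip_hex ` A))) = hexagon_edges (flip_hex ` A)"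
      using sym_diff_clar_matching[OF C0(1)] sym_diff_cancel_left[of C0] C0(2) by metis
    then show ?thesis using vertex_eq[OF that] by (simp add: sym_diff_eq_iff)
  qed
  have "sym_diff C0 ` Pow cube_hexagons = Pow cube_hexagons"
    using C0(1) by (auto intro!: image_eqI[of _ "sym_diff C0" "sym_diff C0 _"] simp: sym_diff_cancel_left)
  moreover have "image flip_hex ` Pow {..<n} = Pow cube_hexagons"
    unfolding cube_hexagons_def by (rule image_Pow_surj) simp
  ultimately have "f_set S cube_hexagons cube_edges = (clar_matching \<circ> sym_diff C0 \<circ> image flip_hex) ` Pow {..<n}"
    unfolding f_set_eq_image image_comp[symmetric] by simp
  also have "\<dots> = \<psi> ` Pow {..<n}" using flipped by (auto intro: image_cong)
  finally show ?thesis using bij by (simp add: bij_betw_def)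
qed

end

lemma inj_on_f_set_clar_covers: "inj_on (\<lambda>(K, F). f_set S K F) {(K, F). clar_cover S K F}"
proof (rule inj_onI, clarsimp)
  fix K F K' F' assume "clar_cover S K F" "clar_cover S K' F'" and eq: "f_set S K F = f_set S K' F'"
  interpret C: clar S K F by (rule clar.intro) fact
  interpret C': clar S K' F' by (rule clar.intro) fact
  show "K = K' \<and> F = F'"
    using C.hexagons_eq_flips C'.hexagons_eq_flips C.edges_eq_Inter_f_set C'.edges_eq_Inter_f_set eq
    by simp
qed

lemma f_set_clar_cover_iso_cube:
  assumes "finite S" "clar_cover S K F"
  shows "graph_iso (f_set S K F) (res_adj S) (cube_vertices (card K)) cube_adj"
proof -
  interpret clar S K F using assms(2) by (rule clar.intro)
  show ?thesis using finite_subset[OF hexagons_subset assms(1)] by (rule f_set_iso_cube)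
qed

lemma cube_eq_f_set_clar_cover:
  assumes "X \<subseteq> {M. perfect_matching S M}" "graph_iso X (res_adj S) (cube_vertices n) cube_adj"
  obtains K F where "clar_cover S K F" "card K = n" "X = f_set S K F"
proof -
  obtain \<psi> where "bij_betw \<psi> (cube_vertices n) X"
    "\<forall>A\<in>cube_vertices n. \<forall>B\<in>cube_vertices n. cube_adj A B \<longleftrightarrow> res_adj S (\<psi> A) (\<psi> B)"
    using graph_iso_sym[OF assms(2)] by (auto simp: graph_iso_def)
  then interpret resonance_cube S n X \<psi>
    using assms(1) by unfold_locales (simp_all add: cube_vertices_def)
  show ?thesis using that clar_cover_cube card_cube_hexagons f_set_cube by simp
qed

theorem corollary1:
  fixes S :: "cell set" and n :: nat
  assumes "hexagonal_system S" and "kekulean S"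
  shows "bij_betw (\<lambda>(K, F). f_set S K F)
           {(K, F). clar_cover S K F \<and> card K = n}
           {X. X \<subseteq> {M. perfect_matching S M} \<and>
               graph_iso X (res_adj S) (cube_vertices n) cube_adj}"
proof -
  have "finite S" using assms(1) by (simp add: hexagonal_system_def)
  have "inj_on (\<lambda>(K, F). f_set S K F) {(K, F). clar_cover S K F \<and> card K = n}"
    by (rule inj_on_subset[OF inj_on_f_set_clar_covers]) blast
  moreover have "(\<lambda>(K, F). f_set S K F) ` {(K, F). clar_cover S K F \<and> card K = n} \<subseteq>
      {X. X \<subseteq> {M. perfect_matching S M} \<and> graph_iso X (res_adj S) (cube_vertices n) cube_adj}"
    using f_set_clar_cover_iso_cube[OF \<open>finite S\<close>] by (auto simp: f_set_def)
  moreover have "{X. X \<subseteq> {M. perfect_matching S M} \<and> graph_iso X (res_adj S) (cube_vertices n) cube_adj} \<subseteq>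
      (\<lambda>(K, F). f_set S K F) ` {(K, F). clar_cover S K F \<and> card K = n}"
    by (auto elim!: cube_eq_f_set_clar_cover)
  ultimately show ?thesis unfolding bij_betw_def by blast
qed

end
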